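(* Let $E\in M_n(\mathbb{FT})$ be an idempotent of rank $n$, let $A$ be in the $\mathcal H$-class of $E$ in $M_n(\mathbb{FT})$, and let $\phi_A:\mathbb{R}^n\to\mathbb{R}^n$ be $x\mapsto A\otimes x$. Regarding $C(E)$ as a subset of $\mathbb{R}^n$ with the usual topology: (i) $\phi_A$ maps interior points of $C(E)$ to interior points of $C(E)$; (ii) $\phi_A$ maps boundary points of $C(E)$ to boundary points of $C(E)$; (iii) $\phi_A$ maps every point not in $C(E)$ to a boundary point of $C(E)$. Dually, right multiplication $x\mapsto x\otimes A$ (for row vectors $x$) induces an $\mathbb{FT}$-module automorphism of $R(E)$ mapping interior points of $R(E)$ to interior points and boundary points to boundary points.
   Context: $\mathbb{FT}$ is $\mathbb{R}$ with $a\oplus b=\max(a,b)$, $a\otimes b=a+b$; $M_n(\mathbb{FT})$ is the semigroup of real $n\times n$ matrices under $(A\otimes B)_{i,j}=\max_k(A_{i,k}+B_{k,j})$, acting on column vectors by $(A\otimes x)_i=\max_k(A_{i,k}+x_k)$ and on row vectors by $(x\otimes A)_j=\max_k(x_k+A_{k,j})$. $C(E)$ (resp. $R(E)$) is the set of finite componentwise maxima of columns (resp. rows) of $E$ shifted by real constants; these are $\mathbb{FT}$-modules under componentwise max and adding constants. The rank of an idempotent $E$ is the minimal cardinality of a generating set of $C(E)$. Green's relations: $a\,\mathcal{R}\,b$ iff $aS^1=bS^1$, $a\,\mathcal{L}\,b$ iff $S^1a=S^1b$, $\mathcal{H}=\mathcal{L}\cap\mathcal{R}$. *)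

theory Defs
  imports "HOL-Analysis.Analysis"
begin

text \<open>Max-plus (tropical) matrices of size n x n are modelled as real^'n^'n
  with a finite index type 'n (so n = CARD('n)); vectors as real^'n.\<close>

definition tmult :: "real^'n::finite^'n \<Rightarrow> real^'n^'n \<Rightarrow> real^'n^'n" where
  "tmult A B = (\<chi> i j. Max (range (\<lambda>k. A$i$k + B$k$j)))"

definition tmv :: "real^'n::finite^'n \<Rightarrow> real^'n \<Rightarrow> real^'n" where
  "tmv A x = (\<chi> i. Max (range (\<lambda>k. A$i$k + x$k)))"

definition tvm :: "real^'n::finite \<Rightarrow> real^'n^'n \<Rightarrow> real^'n" where
  "tvm x A = (\<chi> j. Max (range (\<lambda>k. x$k + A$k$j)))"

definition tidempotent :: "real^'n::finite^'n \<Rightarrow> bool" where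
  "tidempotent E \<longleftrightarrow> tmult E E = E"

definition vmax :: "real^'n::finite \<Rightarrow> real^'n \<Rightarrow> real^'n" where
  "vmax x y = (\<chi> i. max (x$i) (y$i))"

definition vshift :: "real \<Rightarrow> real^'n::finite \<Rightarrow> real^'n" where
  "vshift c x = (\<chi> i. c + x$i)"

definition tspan :: "(real^'n::finite) set \<Rightarrow> (real^'n) set" where
  "tspan G = {x. \<exists>S c. finite S \<and> S \<noteq> {} \<and> S \<subseteq> G \<and>
      x = (\<chi> i. Max ((\<lambda>g. c g + g$i) ` S))}"

definition col :: "real^'n::finite^'n \<Rightarrow> 'n \<Rightarrow> real^'n" where
  "col E j = (\<chi> i. E$i$j)"

definition row :: "real^'n::finite^'n \<Rightarrow> 'n \<Rightarrow> real^'n" where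
  "row E i = (\<chi> j. E$i$j)"

definition colspace :: "real^'n::finite^'n \<Rightarrow> (real^'n) set" where
  "colspace E = tspan (range (col E))"

definition rowspace :: "real^'n::finite^'n \<Rightarrow> (real^'n) set" where
  "rowspace E = tspan (range (row E))"

definition trank :: "real^'n::finite^'n \<Rightarrow> nat" where
  "trank E = (LEAST k. \<exists>G. finite G \<and> card G = k \<and> G \<subseteq> colspace E \<and> tspan G = colspace E)"

text \<open>Green's relations in the semigroup (M_n(FT), tmult); S^1 adds an identity.\<close>
definition greenR :: "real^'n::finite^'n \<Rightarrow> real^'n^'n \<Rightarrow> bool" where
  "greenR a b \<longleftrightarrow> insert a (range (tmult a)) = insert b (range (tmult b))"

definition greenL :: "real^'n::finite^'n \<Rightarrow> real^'n^'n \<Rightarrow> bool" where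
  "greenL a b \<longleftrightarrow> insert a (range (\<lambda>s. tmult s a)) = insert b (range (\<lambda>s. tmult s b))"

definition greenH :: "real^'n::finite^'n \<Rightarrow> real^'n^'n \<Rightarrow> bool" where
  "greenH a b \<longleftrightarrow> greenL a b \<and> greenR a b"

definition ft_module_automorphism :: "(real^'n::finite \<Rightarrow> real^'n) \<Rightarrow> (real^'n) set \<Rightarrow> bool" where
  "ft_module_automorphism f M \<longleftrightarrow> bij_betw f M M \<and>
     (\<forall>x\<in>M. \<forall>y\<in>M. f (vmax x y) = vmax (f x) (f y)) \<and>
     (\<forall>c. \<forall>x\<in>M. f (vshift c x) = vshift c (f x))"

end

theory Submission
  imports Defs "HOL-Homology.Invariance_of_Domain"
begin

text \<open>For an idempotent E the column space C(E) is the fixed-point set of x \<mapsto> E \<otimes> x,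
  hence closed. An element A of the H-class of E has an inverse B in that class, so
  x \<mapsto> A \<otimes> x is a continuous bijection of C(E) inverted by x \<mapsto> B \<otimes> x; by invariance
  of domain it maps the interior into itself, and applying this to B shows that
  boundary points stay on the boundary. Full rank forces a zero diagonal, since a
  column with negative diagonal entry is redundant; then E \<otimes> x \<ge> x, which makes
  E \<otimes> x a boundary point whenever x \<notin> C(E), and A \<otimes> x = A \<otimes> (E \<otimes> x). The statements
  about rows follow by transposition.\<close>

lemma eq_if_same_upper_bounds: "(\<And>c. (a::real) \<le> c \<longleftrightarrow> b \<le> c) \<Longrightarrow> a = b"
  by (meson order_antisym order_refl)

lemma Max_range_le_iff: "Max (range (f::'a::finite \<Rightarrow> real)) \<le> c \<longleftrightarrow> (\<forall>k. f k \<le> c)"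
  by (simp add: Max_le_iff)

lemma add_Max_range_le_iff:
  "a + Max (range (f::'a::finite \<Rightarrow> real)) \<le> c \<longleftrightarrow> (\<forall>k. a + f k \<le> c)"
  using Max_range_le_iff[of f "c - a"] by (auto simp: algebra_simps)

lemma Max_range_add_le_iff:
  "Max (range (f::'a::finite \<Rightarrow> real)) + a \<le> c \<longleftrightarrow> (\<forall>k. f k + a \<le> c)"
  using Max_range_le_iff[of f "c - a"] by (auto simp: algebra_simps)

lemma tmv_nth: "tmv A x $ i = Max (range (\<lambda>k. A$i$k + x$k))"
  by (simp add: tmv_def)

lemma tmv_nth_ge: "A$i$k + x$k \<le> tmv A x $ i"
  by (simp add: tmv_def)

lemma tmv_nth_attained: "\<exists>k. tmv A x $ i = A$i$k + x$k"
proof -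
  have "tmv A x $ i \<in> range (\<lambda>k. A$i$k + x$k)" unfolding tmv_nth by (rule Max_in) auto
  then show ?thesis by auto
qed

lemma tmv_tmult: "tmv A (tmv B x) = tmv (tmult A B) x"
  unfolding vec_eq_iff
  by (auto intro!: eq_if_same_upper_bounds
      simp: tmv_def tmult_def Max_range_le_iff add_Max_range_le_iff Max_range_add_le_iff add.assoc)

lemma tmult_assoc: "tmult A (tmult B C) = tmult (tmult A B) C"
  unfolding vec_eq_iff
  by (auto intro!: eq_if_same_upper_bounds
      simp: tmult_def Max_range_le_iff add_Max_range_le_iff Max_range_add_le_iff add.assoc)

lemma tmult_transpose: "tmult (transpose X) (transpose Y) = transpose (tmult Y X)"
  unfolding vec_eq_iff by (simp add: transpose_def tmult_def add.commute)

lemma tvm_eq_tmv_transpose: "tvm x A = tmv (transpose A) x"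
  unfolding vec_eq_iff by (simp add: transpose_def tmv_def tvm_def add.commute)

lemma tvm_vmax: "tvm (vmax x y) A = vmax (tvm x A) (tvm y A)"
proof -
  have "max a b + c \<le> t \<longleftrightarrow> a + c \<le> t \<and> b + c \<le> t" for a b c t :: real by auto
  then show ?thesis unfolding vec_eq_iff
    by (auto intro!: eq_if_same_upper_bounds simp: tvm_def vmax_def Max_range_le_iff)
qed

lemma tvm_vshift: "tvm (vshift c x) A = vshift c (tvm x A)"
  unfolding vec_eq_iff
  by (auto intro!: eq_if_same_upper_bounds
      simp: tvm_def vshift_def Max_range_le_iff add_Max_range_le_iff add.assoc)

lemma continuous_on_Max:
  assumes "finite K" "K \<noteq> {}" "\<And>k. k \<in> K \<Longrightarrow> continuous_on S (f k)"
  shows "continuous_on S (\<lambda>x. Max ((\<lambda>k. f k x :: real) ` K))"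
  using assms
proof (induction K rule: finite_ne_induct)
  case (insert k F)
  have "(\<lambda>x. Max ((\<lambda>k. f k x) ` insert k F)) = (\<lambda>x. max (f k x) (Max ((\<lambda>k. f k x) ` F)))"
    using insert by auto
  then show ?case using insert by (auto intro!: continuous_on_max)
qed simp

lemma continuous_on_tmv: "continuous_on S (tmv A)"
  unfolding tmv_def
  by (intro continuous_on_vec_lambda continuous_on_Max) (auto intro!: continuous_intros)

lemma idempotent_entry_ge:
  assumes "tmult E E = E"
  shows "E$i$k + E$k$j \<le> E$i$j"
proof -
  have "E$i$k + E$k$j \<le> tmult E E $ i $ j" by (simp add: tmult_def)
  then show ?thesis using assms by simp
qed

lemma tmv_idempotent_col:
  assumes "tmult E E = E"
  shows "tmv E (col E j) = col E j"
proof -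
  have "tmult E E $ i $ j = E $ i $ j" for i using assms by simp
  then show ?thesis by (simp add: vec_eq_iff tmv_def tmult_def col_def)
qed

lemma tmv_max_combination:
  assumes "finite S" "S \<noteq> {}"
  shows "tmv A (\<chi> i. Max ((\<lambda>g. c g + g$i) ` S)) = (\<chi> i. Max ((\<lambda>g. c g + tmv A g $ i) ` S))"
proof -
  have "tmv A (\<chi> i. Max ((\<lambda>g. c g + g$i) ` S)) $ i \<le> t \<longleftrightarrow>
        Max ((\<lambda>g. c g + tmv A g $ i) ` S) \<le> t" for i t
  proof -
    have "A$i$k + Max ((\<lambda>g. c g + g$k) ` S) \<le> t \<longleftrightarrow> (\<forall>g\<in>S. A$i$k + (c g + g$k) \<le> t)" for k
    proof -
      have "A$i$k + Max ((\<lambda>g. c g + g$k) ` S) \<le> t \<longleftrightarrow> Max ((\<lambda>g. c g + g$k) ` S) \<le> t - A$i$k"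
        by linarith
      also have "\<dots> \<longleftrightarrow> (\<forall>g\<in>S. c g + g$k \<le> t - A$i$k)"
        using assms by (simp add: Max_le_iff)
      finally show ?thesis by (auto simp: algebra_simps)
    qed
    moreover have "c g + tmv A g $ i \<le> t \<longleftrightarrow> (\<forall>k. A$i$k + (c g + g$k) \<le> t)" for g
      using add_Max_range_le_iff[of "c g" "\<lambda>k. A$i$k + g$k" t] by (simp add: tmv_nth algebra_simps)
    ultimately show ?thesis
      using assms by (auto simp: tmv_nth Max_range_le_iff Max_le_iff)
  qed
  then show ?thesis by (simp add: vec_eq_iff eq_if_same_upper_bounds)
qed

lemma colspace_subset_fixpoints:
  assumes "tmult E E = E"
  shows "colspace E \<subseteq> {x. tmv E x = x}"
proof
  fix x assume "x \<in> colspace E"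
  then obtain S c where S: "finite S" "S \<noteq> {}" "S \<subseteq> range (col E)"
    and x: "x = (\<chi> i. Max ((\<lambda>g. c g + g$i) ` S))"
    unfolding colspace_def tspan_def by blast
  have "tmv E g = g" if "g \<in> S" for g
    using S(3) that tmv_idempotent_col[OF assms] by blast
  then show "x \<in> {x. tmv E x = x}"
    unfolding x by (simp add: tmv_max_combination[OF S(1,2)] cong: image_cong)
qed

text \<open>Columns may coincide, so the coefficient of a column is the largest
  coefficient among the indices carrying it.\<close>
lemma Max_combination_of_cols_in_tspan:
  assumes "J \<noteq> {}"
  shows "(\<chi> r. Max ((\<lambda>j. E$r$j + x$j) ` J)) \<in> tspan (col E ` J)"
proof -
  define c where "c g = Max ((\<lambda>j. x$j) ` {j\<in>J. col E j = g})" for g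
  have "Max ((\<lambda>g. c g + g$r) ` col E ` J) \<le> t \<longleftrightarrow> Max ((\<lambda>j. E$r$j + x$j) ` J) \<le> t" for r t
  proof -
    have "c g + g$r \<le> t \<longleftrightarrow> (\<forall>j\<in>J. col E j = g \<longrightarrow> E$r$j + x$j \<le> t)" if "g \<in> col E ` J" for g
    proof -
      have "c g \<le> t - g$r \<longleftrightarrow> (\<forall>j\<in>J. col E j = g \<longrightarrow> x$j \<le> t - g$r)"
        unfolding c_def using that by (subst Max_le_iff) auto
      then show ?thesis by (auto simp: col_def)
    qed
    then show ?thesis using assms by (auto simp: Max_le_iff)
  qed
  then have "(\<chi> r. Max ((\<lambda>j. E$r$j + x$j) ` J)) = (\<chi> r. Max ((\<lambda>g. c g + g$r) ` col E ` J))"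
    by (simp add: vec_eq_iff eq_if_same_upper_bounds)
  then show ?thesis
    unfolding tspan_def mem_Collect_eq using assms
    by (intro exI[of _ "col E ` J"] exI[of _ c]) simp
qed

lemma colspace_eq_fixpoints:
  assumes "tmult E E = E"
  shows "colspace E = {x. tmv E x = x}"
proof
  show "{x. tmv E x = x} \<subseteq> colspace E"
  proof
    fix x assume "x \<in> {x. tmv E x = x}"
    then have "x = (\<chi> r. Max ((\<lambda>j. E$r$j + x$j) ` UNIV))" by (simp add: tmv_def)
    also have "\<dots> \<in> colspace E"
      unfolding colspace_def by (rule Max_combination_of_cols_in_tspan) simp
    finally show "x \<in> colspace E" .
  qed
qed (rule colspace_subset_fixpoints[OF assms])

lemma closed_colspace:
  assumes "tmult E E = E"
  shows "closed (colspace E)"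
  unfolding colspace_eq_fixpoints[OF assms]
  by (intro closed_Collect_eq continuous_on_tmv continuous_on_id)

lemma tspan_mono: "G \<subseteq> H \<Longrightarrow> tspan G \<subseteq> tspan H"
  unfolding tspan_def by blast

lemma trank_le_card:
  assumes "finite G" "G \<subseteq> colspace E" "tspan G = colspace E"
  shows "trank E \<le> card G"
  unfolding trank_def by (rule Least_le) (use assms in blast)

lemma fixpoint_attained_off_diagonal:
  assumes "E$i$i < 0" "tmv E x = x"
  obtains q where "q \<noteq> i" "x$i = E$i$q + x$q"
proof -
  obtain q where "tmv E x $ i = E$i$q + x$q" using tmv_nth_attained by blast
  with assms have "x$i = E$i$q + x$q" "q \<noteq> i" by auto
  then show ?thesis using that by blast
qed

text \<open>A column with negative diagonal entry is redundant: the term of index i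
  in the fixed-point equation of x is dominated by the term attaining x$i.\<close>
lemma fixpoint_eq_Max_omit_index:
  assumes idem: "tmult E E = E" and "E$i$i < 0" "tmv E x = x"
  shows "x$r = Max ((\<lambda>j. E$r$j + x$j) ` (UNIV - {i}))"
proof (rule eq_if_same_upper_bounds)
  fix t
  obtain q where q: "q \<noteq> i" "x$i = E$i$q + x$q"
    using fixpoint_attained_off_diagonal assms(2,3) by blast
  have "E$r$i + x$i \<le> E$r$q + x$q"
    using q(2) idempotent_entry_ge[OF idem, of r i q] by linarith
  then have "(\<forall>j. E$r$j + x$j \<le> t) \<longleftrightarrow> (\<forall>j\<in>UNIV - {i}. E$r$j + x$j \<le> t)"
    using q(1) by (smt (verit) Diff_iff UNIV_I singletonD)
  moreover have "x$r \<le> t \<longleftrightarrow> (\<forall>j. E$r$j + x$j \<le> t)"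
    using Max_range_le_iff[of "\<lambda>j. E$r$j + x$j" t] unfolding tmv_nth[symmetric] assms(3) .
  moreover have "UNIV - {i} \<noteq> {}" using q(1) by blast
  ultimately show "x$r \<le> t \<longleftrightarrow> Max ((\<lambda>j. E$r$j + x$j) ` (UNIV - {i})) \<le> t"
    by (simp add: Max_le_iff)
qed

lemma colspace_eq_tspan_omit_col:
  assumes idem: "tmult E E = E" and neg: "E$i$i < 0"
  shows "colspace E = tspan (col E ` (UNIV - {i}))"
proof
  obtain q where "q \<noteq> i"
    using fixpoint_attained_off_diagonal[OF neg tmv_idempotent_col[OF idem]] by blast
  then have J: "UNIV - {i} \<noteq> {}" by blast
  show "colspace E \<subseteq> tspan (col E ` (UNIV - {i}))"
  proof
    fix x assume "x \<in> colspace E"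
    then have fixed: "tmv E x = x" using colspace_eq_fixpoints[OF idem] by blast
    have "x = (\<chi> r. Max ((\<lambda>j. E$r$j + x$j) ` (UNIV - {i})))"
      unfolding vec_eq_iff vec_lambda_beta using fixpoint_eq_Max_omit_index[OF idem neg fixed] by blast
    also have "\<dots> \<in> tspan (col E ` (UNIV - {i}))"
      by (rule Max_combination_of_cols_in_tspan[OF J])
    finally show "x \<in> tspan (col E ` (UNIV - {i}))" .
  qed
  show "tspan (col E ` (UNIV - {i})) \<subseteq> colspace E"
    unfolding colspace_def by (rule tspan_mono) blast
qed

lemma full_rank_idempotent_diag_zero:
  fixes E :: "real^'n::finite^'n"
  assumes idem: "tmult E E = E" and rank: "trank E = CARD('n)"
  shows "E$i$i = 0"
proof (rule ccontr)
  assume "E$i$i \<noteq> 0"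
  then have neg: "E$i$i < 0" using idempotent_entry_ge[OF idem, of i i i] by linarith
  have "col E ` (UNIV - {i}) \<subseteq> colspace E"
    using colspace_eq_fixpoints[OF idem] tmv_idempotent_col[OF idem] by blast
  then have "trank E \<le> card (col E ` (UNIV - {i}))"
    using colspace_eq_tspan_omit_col[OF idem neg] by (intro trank_le_card) auto
  also have "\<dots> \<le> card (UNIV - {i})" by (rule card_image_le) simp
  also have "\<dots> < CARD('n)" by (simp add: card_Diff_singleton card_gt_0_iff)
  finally show False using rank by simp
qed

lemma tmv_in_colspace:
  assumes "tmult E E = E" "tmult E A = A"
  shows "tmv A x \<in> colspace E"
  using assms by (simp add: colspace_eq_fixpoints tmv_tmult)

lemma frontier_colspace:
  assumes "tmult E E = E"
  shows "frontier (colspace E) = colspace E - interior (colspace E)"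
  unfolding frontier_def closure_closed[OF closed_colspace[OF assms]] ..

lemma bij_betw_tmv_colspace:
  assumes idem: "tmult E E = E" and "tmult E A = A" "tmult E B = B" "tmult B A = E" "tmult A B = E"
  shows "bij_betw (tmv A) (colspace E) (colspace E)"
proof (rule bij_betw_byWitness[where f' = "tmv B"])
  show "\<forall>x\<in>colspace E. tmv B (tmv A x) = x" "\<forall>x\<in>colspace E. tmv A (tmv B x) = x"
    using assms by (simp_all add: colspace_eq_fixpoints tmv_tmult)
qed (use assms tmv_in_colspace in blast)+

text \<open>Invariance of domain, applied to tmv A, which tmv B inverts on colspace E.\<close>
lemma interior_colspace_tmv:
  assumes idem: "tmult E E = E" and EA: "tmult E A = A" and BA: "tmult B A = E"
    and x: "x \<in> interior (colspace E)"
  shows "tmv A x \<in> interior (colspace E)"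
proof -
  have "inj_on (tmv A) (interior (colspace E))"
  proof (rule inj_on_inverseI)
    fix y assume "y \<in> interior (colspace E)"
    then have "tmv E y = y" using interior_subset colspace_eq_fixpoints[OF idem] by blast
    then show "tmv B (tmv A y) = y" by (simp add: tmv_tmult BA)
  qed
  then have "open (tmv A ` interior (colspace E))"
    by (rule invariance_of_domain[OF continuous_on_tmv open_interior])
  moreover have "tmv A ` interior (colspace E) \<subseteq> colspace E"
    using tmv_in_colspace[OF idem EA] by blast
  ultimately have "tmv A ` interior (colspace E) \<subseteq> interior (colspace E)"
    by (rule interior_maximal[rotated])
  then show ?thesis using x by blast
qed

lemma frontier_colspace_tmv:
  assumes idem: "tmult E E = E" and EA: "tmult E A = A" and EB: "tmult E B = B"
    and BA: "tmult B A = E" and AB: "tmult A B = E"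
    and x: "x \<in> frontier (colspace E)"
  shows "tmv A x \<in> frontier (colspace E)"
proof -
  have x_not_int: "x \<notin> interior (colspace E)" and "x \<in> colspace E"
    using x unfolding frontier_colspace[OF idem] by auto
  then have x_fixed: "tmv E x = x" using colspace_eq_fixpoints[OF idem] by blast
  have "tmv A x \<notin> interior (colspace E)"
  proof
    assume "tmv A x \<in> interior (colspace E)"
    then have "tmv B (tmv A x) \<in> interior (colspace E)"
      by (rule interior_colspace_tmv[OF idem EB AB])
    then show False using x_not_int by (simp add: tmv_tmult BA x_fixed)
  qed
  then show ?thesis
    unfolding frontier_colspace[OF idem] using tmv_in_colspace[OF idem EA] by blast
qed

text \<open>With zero diagonal, y = E \<otimes> x dominates x. At a coordinate i where
  x$i < y$i, the maximum defining y$i is attained at some j \<noteq> i, forcing the tight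
  equation y$i = E$i$j + y$j; lowering y$i alone breaks it, so y has points of the
  complement of colspace E arbitrarily close.\<close>
lemma tmv_idempotent_in_frontier:
  assumes idem: "tmult E E = E" and diag: "\<And>i. E$i$i = 0" and x: "x \<notin> colspace E"
  shows "tmv E x \<in> frontier (colspace E)"
proof -
  define y where "y = tmv E x"
  have y_fixed: "tmv E y = y" unfolding y_def by (simp add: tmv_tmult idem)
  have ge: "x$k \<le> y$k" for k
    using tmv_nth_ge[of E k k x] diag[of k] unfolding y_def by simp
  obtain i where "y$i \<noteq> x$i"
    using x colspace_eq_fixpoints[OF idem] unfolding y_def vec_eq_iff by auto
  then have lt: "x$i < y$i" using ge[of i] by simp
  obtain j where j: "y$i = E$i$j + x$j" using tmv_nth_attained unfolding y_def by blast
  have ji: "j \<noteq> i" using j lt diag[of i] by auto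
  have tight: "y$i = E$i$j + y$j"
    using j ge[of j] tmv_nth_ge[of E i j y] y_fixed by simp
  have "y \<notin> interior (colspace E)"
  proof
    assume "y \<in> interior (colspace E)"
    then obtain e where e: "e > 0" "ball y e \<subseteq> colspace E" unfolding mem_interior by blast
    define z where "z = y - (e/2) *\<^sub>R axis i (1::real)"
    have "z \<in> ball y e" using e by (simp add: z_def dist_norm)
    then have "tmv E z = z" using e colspace_eq_fixpoints[OF idem] by blast
    then have "E$i$j + z$j \<le> z$i" using tmv_nth_ge[of E i j z] by simp
    moreover have "z$i = y$i - e/2" "z$j = y$j" using ji by (auto simp: z_def axis_def)
    ultimately show False using tight e by linarith
  qed
  then show ?thesis
    unfolding frontier_colspace[OF idem] y_def using tmv_in_colspace[OF idem] idem by blast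
qed

lemma greenR_idempotent:
  assumes "greenR A E" and idem: "tmult E E = E"
  shows "tmult E A = A" and "\<exists>C. tmult A C = E"
proof -
  have A: "A \<in> insert E (range (tmult E))" and E: "E \<in> insert A (range (tmult A))"
    using assms(1) unfolding greenR_def by blast+
  from A show "tmult E A = A" by (auto simp: tmult_assoc idem)
  from E show "\<exists>C. tmult A C = E"
    using \<open>tmult E A = A\<close> idem by (metis imageE insertE)
qed

lemma greenL_idempotent:
  assumes "greenL A E" and idem: "tmult E E = E"
  shows "tmult A E = A" and "\<exists>C. tmult C A = E"
proof -
  have A: "A \<in> insert E (range (\<lambda>s. tmult s E))" and E: "E \<in> insert A (range (\<lambda>s. tmult s A))"
    using assms(1) unfolding greenL_def by blast+
  from A show "tmult A E = A" by (auto simp: tmult_assoc[symmetric] idem)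
  from E show "\<exists>C. tmult C A = E"
    using \<open>tmult A E = A\<close> idem by (metis imageE insertE)
qed

lemma greenH_idempotent_inverse:
  assumes "greenH A E" and idem: "tmult E E = E"
  obtains B where "tmult E A = A" "tmult A E = A" "tmult A B = E" "tmult B A = E"
    "tmult E B = B" "tmult B E = B"
proof -
  have EA: "tmult E A = A" and AE: "tmult A E = A"
    using assms greenR_idempotent greenL_idempotent unfolding greenH_def by blast+
  obtain R L where R: "tmult A R = E" and L: "tmult L A = E"
    using assms greenR_idempotent greenL_idempotent unfolding greenH_def by metis
  define B where "B = tmult E R"
  have B_alt: "B = tmult L E"
    unfolding B_def by (metis R L tmult_assoc)
  have "tmult A B = E" unfolding B_def by (simp add: tmult_assoc AE R)
  moreover have "tmult B A = E" unfolding B_alt by (simp add: tmult_assoc[symmetric] EA L)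
  moreover have "tmult E B = B" unfolding B_def by (simp add: tmult_assoc idem)
  moreover have "tmult B E = B" unfolding B_alt by (simp add: tmult_assoc[symmetric] idem)
  ultimately show ?thesis using that EA AE by blast
qed

lemma rowspace_eq_colspace_transpose: "rowspace E = colspace (transpose E)"
proof -
  have "row E = col (transpose E)" by (simp add: fun_eq_iff row_def col_def transpose_def)
  then show ?thesis unfolding rowspace_def colspace_def by simp
qed

theorem lemma7p2:
  fixes E A :: "real^'n::finite^'n"
  assumes "tidempotent E"
    and "trank E = CARD('n)"
    and "greenH A E"
  shows "(\<forall>x \<in> interior (colspace E). tmv A x \<in> interior (colspace E))
    \<and> (\<forall>x \<in> frontier (colspace E). tmv A x \<in> frontier (colspace E))
    \<and> (\<forall>x. x \<notin> colspace E \<longrightarrow> tmv A x \<in> frontier (colspace E))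
    \<and> ft_module_automorphism (\<lambda>x. tvm x A) (rowspace E)
    \<and> (\<forall>x \<in> interior (rowspace E). tvm x A \<in> interior (rowspace E))
    \<and> (\<forall>x \<in> frontier (rowspace E). tvm x A \<in> frontier (rowspace E))"
proof -
  have idem: "tmult E E = E" using assms(1) unfolding tidempotent_def .
  obtain B where EA: "tmult E A = A" and AE: "tmult A E = A" and AB: "tmult A B = E"
    and BA: "tmult B A = E" and EB: "tmult E B = B" and BE: "tmult B E = B"
    using greenH_idempotent_inverse[OF assms(3) idem] .
  have outside: "tmv A x \<in> frontier (colspace E)" if "x \<notin> colspace E" for x
  proof -
    have "tmv E x \<in> frontier (colspace E)"
      using tmv_idempotent_in_frontier[OF idem full_rank_idempotent_diag_zero[OF idem assms(2)] that] .
    then have "tmv A (tmv E x) \<in> frontier (colspace E)"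
      by (rule frontier_colspace_tmv[OF idem EA EB BA AB])
    then show ?thesis by (simp add: tmv_tmult AE)
  qed
  have "tmult (transpose E) (transpose E) = transpose E" "tmult (transpose E) (transpose A) = transpose A"
    "tmult (transpose E) (transpose B) = transpose B" "tmult (transpose B) (transpose A) = transpose E"
    "tmult (transpose A) (transpose B) = transpose E"
    by (simp_all add: tmult_transpose idem AE BE AB BA)
  note row_facts = interior_colspace_tmv[OF this(1,2,4)] frontier_colspace_tmv[OF this]
    bij_betw_tmv_colspace[OF this]
  have "ft_module_automorphism (\<lambda>x. tvm x A) (rowspace E)"
    unfolding ft_module_automorphism_def tvm_eq_tmv_transpose rowspace_eq_colspace_transpose
    using row_facts(3) by (simp add: tvm_vmax tvm_vshift tvm_eq_tmv_transpose[symmetric])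
  then show ?thesis
    using interior_colspace_tmv[OF idem EA BA] frontier_colspace_tmv[OF idem EA EB BA AB] outside
      row_facts(1,2)
    by (simp add: tvm_eq_tmv_transpose rowspace_eq_colspace_transpose)
qed

end
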